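(* Let $Y$ be a real symmetric log-concave random variable, $p\geq 2$ and $V>0$ with $\|Y\|_p\geq V$. Then $\mathbb{E}(|Y|\wedge V)^p\geq (V/12)^p$.
   Context: $\|Y\|_p:=(\mathbb{E}|Y|^p)^{1/p}$; $a\wedge b=\min\{a,b\}$. A real random variable is log-concave if its law $\mu$ satisfies $\mu(\lambda K+(1-\lambda)L)\geq\mu(K)^\lambda\mu(L)^{1-\lambda}$ for all nonempty compact $K,L\subset\mathbb{R}$ and $\lambda\in[0,1]$; symmetric means $Y$ and $-Y$ have the same law. *)

theory Defs
  imports "HOL-Probability.Probability"
begin

definition log_concave_measure :: "real measure \<Rightarrow> bool" where
  "log_concave_measure \<mu> \<longleftrightarrow>
     (\<forall>K L lam. compact K \<and> K \<noteq> {} \<and> compact L \<and> L \<noteq> {} \<and> 0 \<le> lam \<and> lam \<le> 1 \<longrightarrow>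
        measure \<mu> {lam * k + (1 - lam) * l | k l. k \<in> K \<and> l \<in> L}
          \<ge> measure \<mu> K powr lam * measure \<mu> L powr (1 - lam))"

definition log_concave_rv :: "'a measure \<Rightarrow> ('a \<Rightarrow> real) \<Rightarrow> bool" where
  "log_concave_rv M Y \<longleftrightarrow> log_concave_measure (distr M borel Y)"

definition symmetric_rv :: "'a measure \<Rightarrow> ('a \<Rightarrow> real) \<Rightarrow> bool" where
  "symmetric_rv M Y \<longleftrightarrow> distr M borel Y = distr M borel (\<lambda>x. - Y x)"

end

theory Submission
  imports Defs
begin

(* Let q = P(|Y| >= V). Markov's inequality for the truncation gives E(|Y| min V)^p >= V^p q,
   which settles the case q > 12^-p. Otherwise, log-concavity with weight 1/n applied to
   [n t, oo) and [0, oo), together with P(Y >= 0) >= 1/2 from symmetry, yields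
   P(|Y| >= n t) <= P(|Y| >= t)^n, so P(|Y| >= (m+1) V) <= q^(m+1). Bounding |Y|^p by
   ((m+2) V)^p on each shell {(m+1) V <= |Y| < (m+2) V} then shows that the part of E|Y|^p
   above level V is at most V^p/5, whence V^p <= E|Y|^p <= E(|Y| min V)^p + V^p/5. *)

lemma powr_power_nonneg:
  fixes x r :: real
  assumes "0 \<le> x" and "n \<noteq> 0"
  shows "(x powr r) ^ n = x powr (real n * r)"
  using assms by (cases "x = 0") (auto simp: powr_power)

lemma log_concave_measure_Icc_power_le:
  fixes \<mu> :: "real measure" and t N :: real and n :: nat
  assumes "finite_measure \<mu>" and "sets \<mu> = sets borel" and "log_concave_measure \<mu>"
    and "t > 0" and "n \<ge> 2" and "n * t \<le> N"
  shows "measure \<mu> {n*t..N} * measure \<mu> {0..N} ^ (n - 1) \<le> measure \<mu> {t..} ^ n"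
proof -
  define lam where "lam = 1 / real n"
  have lam: "0 \<le> lam" "lam \<le> 1" "real n * lam = 1" "real n * (1 - lam) = real (n - 1)"
    using \<open>n \<ge> 2\<close> by (auto simp: lam_def field_simps)
  let ?C = "{lam * k + (1 - lam) * l | k l. k \<in> {n*t..N} \<and> l \<in> {0..N}}"
  have "{n*t..N} \<noteq> {}" and "{0..N} \<noteq> {}"
    using \<open>n * t \<le> N\<close> \<open>t > 0\<close> by (auto intro: order_trans[of 0 "n*t" N])
  then have "measure \<mu> {n*t..N} powr lam * measure \<mu> {0..N} powr (1 - lam) \<le> measure \<mu> ?C"
    using assms(3) lam(1,2) unfolding log_concave_measure_def by blast
  also have "?C \<subseteq> {t..}"
  proof
    fix z assume "z \<in> ?C"
    then obtain k l where z: "z = lam * k + (1 - lam) * l" "k \<ge> n*t" "l \<ge> 0" by auto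
    have "t = lam * (n*t)" using \<open>n \<ge> 2\<close> by (simp add: lam_def)
    also have "\<dots> \<le> lam * k" using z lam by (intro mult_left_mono) auto
    also have "\<dots> \<le> z" using z lam by simp
    finally show "z \<in> {t..}" by simp
  qed
  then have "measure \<mu> ?C \<le> measure \<mu> {t..}"
    using assms(1,2) by (intro finite_measure.finite_measure_mono) auto
  finally have "(measure \<mu> {n*t..N} powr lam * measure \<mu> {0..N} powr (1 - lam)) ^ n
      \<le> measure \<mu> {t..} ^ n"
    by (intro power_mono) auto
  moreover have "(measure \<mu> A powr lam) ^ n = measure \<mu> A"
    and "(measure \<mu> A powr (1 - lam)) ^ n = measure \<mu> A ^ (n - 1)" for A
    using \<open>n \<ge> 2\<close> lam(3,4) by (simp_all add: powr_power_nonneg powr_realpow' del: of_nat_diff)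
  ultimately show ?thesis by (simp add: power_mult_distrib)
qed

lemma measure_Icc_tendsto_Ici:
  fixes \<mu> :: "real measure"
  assumes "finite_measure \<mu>" and "sets \<mu> = sets borel"
  shows "(\<lambda>N. measure \<mu> {c..real N}) \<longlonglongrightarrow> measure \<mu> {c..}"
proof -
  have "(\<lambda>N. measure \<mu> {c..real N}) \<longlonglongrightarrow> measure \<mu> (\<Union>N. {c..real N})"
  proof (rule finite_measure.finite_Lim_measure_incseq[OF assms(1)])
    show "range (\<lambda>N. {c..real N}) \<subseteq> sets \<mu>" unfolding assms(2) by auto
    show "incseq (\<lambda>N. {c..real N})" by (rule monoI) auto
  qed
  also have "(\<Union>N. {c..real N}) = {c..}"
  proof (intro equalityI subsetI)
    fix x assume "x \<in> {c..}"
    then have "x \<in> {c..real (nat \<lceil>x\<rceil>)}" by (simp add: real_nat_ceiling_ge)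
    then show "x \<in> (\<Union>N. {c..real N})" by blast
  qed auto
  finally show ?thesis .
qed

lemma log_concave_measure_Ici_power_le:
  fixes \<mu> :: "real measure" and t :: real and n :: nat
  assumes "finite_measure \<mu>" and "sets \<mu> = sets borel" and "log_concave_measure \<mu>"
    and "t > 0" and "n \<ge> 2"
  shows "measure \<mu> {n*t..} * measure \<mu> {0..} ^ (n - 1) \<le> measure \<mu> {t..} ^ n"
  \<comment> \<open>Log-concavity is only assumed for compact sets, hence the detour through intervals.\<close>
proof (rule LIMSEQ_le_const2)
  show "(\<lambda>N. measure \<mu> {n*t..real N} * measure \<mu> {0..real N} ^ (n - 1))
      \<longlonglongrightarrow> measure \<mu> {n*t..} * measure \<mu> {0..} ^ (n - 1)"
    using assms(1,2) by (intro tendsto_intros measure_Icc_tendsto_Ici)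
  show "\<exists>N0. \<forall>N\<ge>N0. measure \<mu> {n*t..real N} * measure \<mu> {0..real N} ^ (n - 1)
      \<le> measure \<mu> {t..} ^ n"
  proof (intro exI allI impI)
    fix N assume "nat \<lceil>n * t\<rceil> \<le> N"
    then show "measure \<mu> {n*t..real N} * measure \<mu> {0..real N} ^ (n - 1) \<le> measure \<mu> {t..} ^ n"
      using assms by (intro log_concave_measure_Icc_power_le) auto
  qed
qed

lemma symmetric_rv_distr_Iic_eq_Ici:
  assumes "Y \<in> borel_measurable M" and "symmetric_rv M Y"
  shows "measure (distr M borel Y) {..-c} = measure (distr M borel Y) {c..}"
proof -
  have "measure (distr M borel Y) {c..} = measure (distr M borel (\<lambda>x. - Y x)) {c..}"
    using assms(2) by (simp add: symmetric_rv_def)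
  also have "\<dots> = measure M ((\<lambda>x. - Y x) -` {c..} \<inter> space M)"
    using assms(1) by (intro measure_distr) auto
  also have "(\<lambda>x. - Y x) -` {c..} \<inter> space M = Y -` {..-c} \<inter> space M" by auto
  also have "measure M \<dots> = measure (distr M borel Y) {..-c}"
    using assms(1) by (intro measure_distr[symmetric]) auto
  finally show ?thesis by simp
qed

lemma symmetric_rv_measure_abs_ge:
  assumes "prob_space M" and "Y \<in> borel_measurable M" and "symmetric_rv M Y" and "s > 0"
  shows "measure M {x\<in>space M. s \<le> \<bar>Y x\<bar>} = 2 * measure (distr M borel Y) {s..}"
proof -
  interpret prob_space "distr M borel Y"
    using assms(1,2) by (intro prob_space.prob_space_distr) auto
  have "{x\<in>space M. s \<le> \<bar>Y x\<bar>} = Y -` ({..-s} \<union> {s..}) \<inter> space M" by auto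
  then have "measure M {x\<in>space M. s \<le> \<bar>Y x\<bar>} = measure (distr M borel Y) ({..-s} \<union> {s..})"
    using assms(2) by (simp add: measure_distr)
  also have "\<dots> = measure (distr M borel Y) {..-s} + measure (distr M borel Y) {s..}"
    using assms(4) by (intro finite_measure_Union) auto
  finally show ?thesis using symmetric_rv_distr_Iic_eq_Ici[OF assms(2,3)] by simp
qed

lemma symmetric_rv_distr_Ici_0_ge_half:
  assumes "prob_space M" and "Y \<in> borel_measurable M" and "symmetric_rv M Y"
  shows "measure (distr M borel Y) {0..} \<ge> 1/2"
proof -
  interpret prob_space "distr M borel Y"
    using assms(1,2) by (intro prob_space.prob_space_distr) auto
  have "1 = measure (distr M borel Y) ({..0} \<union> {0..})"
  proof -
    have "{..0::real} \<union> {0..} = UNIV" by auto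
    then show ?thesis using prob_space by simp
  qed
  also have "\<dots> \<le> measure (distr M borel Y) {..0} + measure (distr M borel Y) {0..}"
    by (intro measure_Un_le) auto
  finally show ?thesis using symmetric_rv_distr_Iic_eq_Ici[OF assms(2,3), of 0] by simp
qed

lemma log_concave_symmetric_rv_tail_power:
  fixes t :: real and n :: nat
  assumes "prob_space M" and "Y \<in> borel_measurable M" and "symmetric_rv M Y"
    and "log_concave_rv M Y" and "t > 0" and "n \<ge> 1"
  shows "measure M {x\<in>space M. n * t \<le> \<bar>Y x\<bar>} \<le> measure M {x\<in>space M. t \<le> \<bar>Y x\<bar>} ^ n"
proof (cases "n = 1")
  case False
  define \<mu> where "\<mu> = distr M borel Y"
  have \<mu>: "finite_measure \<mu>" "sets \<mu> = sets borel" "log_concave_measure \<mu>"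
    using assms(1,2,4) prob_space.prob_space_distr[of M Y borel]
    by (auto simp: \<mu>_def log_concave_rv_def prob_space_def)
  have "2 * measure \<mu> {n*t..} = 2 ^ n * (measure \<mu> {n*t..} * (1/2) ^ (n - 1))"
    using assms(6) by (cases n) (auto simp: power_divide)
  also have "\<dots> \<le> 2 ^ n * (measure \<mu> {n*t..} * measure \<mu> {0..} ^ (n - 1))"
    using symmetric_rv_distr_Ici_0_ge_half[OF assms(1-3)]
    by (intro mult_left_mono power_mono) (auto simp: \<mu>_def)
  also have "\<dots> \<le> 2 ^ n * measure \<mu> {t..} ^ n"
    using \<mu> assms(5,6) False by (intro mult_left_mono log_concave_measure_Ici_power_le) auto
  also have "\<dots> = (2 * measure \<mu> {t..}) ^ n"
    by (simp add: power_mult_distrib)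
  finally show ?thesis
    using assms(5,6) symmetric_rv_measure_abs_ge[OF assms(1-3)] by (simp add: \<mu>_def)
qed simp

lemma powr_le_truncated_plus_tails:
  fixes y V p :: real
  assumes "V > 0" and "p \<ge> 0"
  shows "ennreal (\<bar>y\<bar> powr p) \<le> ennreal (min \<bar>y\<bar> V powr p)
    + (\<Sum>m. ennreal (((real m + 2) * V) powr p) * indicator {(real m + 1) * V..} \<bar>y\<bar>)"
proof (cases "\<bar>y\<bar> < V")
  case False
  define m where "m = nat \<lfloor>\<bar>y\<bar> / V\<rfloor> - 1"
  have "1 \<le> \<bar>y\<bar> / V" using False assms(1) by simp
  then have "real m + 1 = of_int \<lfloor>\<bar>y\<bar> / V\<rfloor>"
    by (simp add: m_def of_nat_diff le_nat_iff le_floor_iff)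
  then have "real m + 1 \<le> \<bar>y\<bar> / V" "\<bar>y\<bar> / V < real m + 2"
    using floor_correct[of "\<bar>y\<bar> / V"] by linarith+
  then have m: "(real m + 1) * V \<le> \<bar>y\<bar>" "\<bar>y\<bar> \<le> (real m + 2) * V"
    using assms(1) by (auto simp: field_simps)
  have "ennreal (\<bar>y\<bar> powr p) \<le> ennreal (((real m + 2) * V) powr p) * indicator {(real m + 1) * V..} \<bar>y\<bar>"
    using m assms(2) by (auto intro: ennreal_leI powr_mono2)
  also have "\<dots> \<le> (\<Sum>m. ennreal (((real m + 2) * V) powr p) * indicator {(real m + 1) * V..} \<bar>y\<bar>)"
  proof -
    have "F m \<le> suminf F" for F :: "nat \<Rightarrow> ennreal"
      using sum_le_suminf[of F "{m}"] by simp
    then show ?thesis .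
  qed
  finally show ?thesis by (simp add: add_increasing)
qed (simp add: add_increasing2)

lemma nn_integral_powr_le_truncated_plus_tails:
  fixes Y :: "'a \<Rightarrow> real" and V p :: real
  assumes "Y \<in> borel_measurable M" and "V > 0" and "p \<ge> 0"
  shows "(\<integral>\<^sup>+ x. ennreal (\<bar>Y x\<bar> powr p) \<partial>M) \<le> (\<integral>\<^sup>+ x. ennreal (min \<bar>Y x\<bar> V powr p) \<partial>M)
    + (\<Sum>m. ennreal (((real m + 2) * V) powr p) * emeasure M {x\<in>space M. (real m + 1) * V \<le> \<bar>Y x\<bar>})"
proof -
  let ?tail = "\<lambda>m x. ennreal (((real m + 2) * V) powr p) * indicator {(real m + 1) * V..} \<bar>Y x\<bar>"
  have tail: "(\<integral>\<^sup>+ x. ?tail m x \<partial>M)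
      = ennreal (((real m + 2) * V) powr p) * emeasure M {x\<in>space M. (real m + 1) * V \<le> \<bar>Y x\<bar>}" for m
  proof -
    have "(\<integral>\<^sup>+ x. ?tail m x \<partial>M) = (\<integral>\<^sup>+ x. ennreal (((real m + 2) * V) powr p)
        * indicator {x\<in>space M. (real m + 1) * V \<le> \<bar>Y x\<bar>} x \<partial>M)"
      by (intro nn_integral_cong) (auto simp: indicator_def)
    also have "\<dots> = ennreal (((real m + 2) * V) powr p) * emeasure M {x\<in>space M. (real m + 1) * V \<le> \<bar>Y x\<bar>}"
      using assms(1) by (intro nn_integral_cmult_indicator) measurable
    finally show ?thesis .
  qed
  have "(\<integral>\<^sup>+ x. ennreal (\<bar>Y x\<bar> powr p) \<partial>M)
      \<le> (\<integral>\<^sup>+ x. ennreal (min \<bar>Y x\<bar> V powr p) + (\<Sum>m. ?tail m x) \<partial>M)"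
    using assms(2,3) by (intro nn_integral_mono powr_le_truncated_plus_tails)
  also have "\<dots> = (\<integral>\<^sup>+ x. ennreal (min \<bar>Y x\<bar> V powr p) \<partial>M) + (\<Sum>m. \<integral>\<^sup>+ x. ?tail m x \<partial>M)"
    using assms(1) by (simp add: nn_integral_add nn_integral_suminf)
  finally show ?thesis by (simp only: tail)
qed

lemma power_le_powr_power:
  fixes q c p :: real
  assumes "0 \<le> q" and "q \<le> c powr p" and "c > 0"
  shows "q ^ n \<le> (c ^ n) powr p"
proof -
  have "q ^ n \<le> (c powr p) ^ n"
    using assms(1,2) by (intro power_mono)
  also have "\<dots> = (c powr real n) powr p"
    using assms(3) by (simp add: powr_powr powr_power ac_simps)
  also have "\<dots> = (c ^ n) powr p"
    using assms(3) by (simp add: powr_realpow)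
  finally show ?thesis .
qed

lemma weighted_geometric_term_le:
  fixes p V q :: real and m :: nat
  assumes "p \<ge> 1" and "V > 0" and "0 \<le> q" and "q \<le> (1/12) powr p"
  shows "((real m + 2) * V) powr p * q ^ (m + 1) \<le> V powr p * (1/6) ^ (m + 1)"
proof -
  define a where "a = (real m + 2) * (1/12) ^ (m + 1)"
  have "m + 2 \<le> (2::nat) ^ (m + 1)"
    using less_exp[of "m + 1"] by simp
  then have "real m + 2 \<le> 2 ^ (m + 1)"
    using of_nat_mono[where 'a=real] by fastforce
  then have "a \<le> 2 ^ (m + 1) * (1/12) ^ (m + 1)"
    unfolding a_def by (intro mult_right_mono) auto
  also have "\<dots> = (1/6) ^ (m + 1)"
    by (simp flip: power_mult_distrib)
  finally have a: "0 \<le> a" "a \<le> (1/6) ^ (m + 1)"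
    by (auto simp: a_def)
  moreover have "((1::real)/6) ^ (m + 1) \<le> 1" by (rule power_le_one) auto
  ultimately have "a \<le> 1" by linarith
  then have "a powr p \<le> a powr 1"
    using a(1) assms(1) by (intro powr_mono') auto
  then have "a powr p \<le> a"
    using a(1) by simp
  have "q ^ (m + 1) \<le> ((1/12) ^ (m + 1)) powr p"
    using assms(3,4) by (intro power_le_powr_power) auto
  then have "((real m + 2) * V) powr p * q ^ (m + 1)
      \<le> ((real m + 2) * V) powr p * ((1/12) ^ (m + 1)) powr p"
    by (intro mult_left_mono) auto
  also have "\<dots> = ((real m + 2) * V * (1/12) ^ (m + 1)) powr p"
    by (rule powr_mult[symmetric])
  also have "\<dots> = V powr p * a powr p"
    using assms(2) a(1) by (simp add: a_def powr_mult[symmetric] ac_simps)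
  also have "\<dots> \<le> V powr p * (1/6) ^ (m + 1)"
    using \<open>a powr p \<le> a\<close> a by (intro mult_left_mono) auto
  finally show ?thesis .
qed

lemma weighted_geometric_series_le:
  fixes p V q :: real
  assumes "p \<ge> 1" and "V > 0" and "0 \<le> q" and "q \<le> (1/12) powr p"
  shows "(\<Sum>m. ennreal (((real m + 2) * V) powr p * q ^ (m + 1))) \<le> ennreal (V powr p / 5)"
proof -
  define g where "g m = V powr p * (1/6) ^ (m + 1)" for m
  have "g = (\<lambda>m. V powr p * ((1/6) ^ m / 6))"
    by (auto simp: g_def)
  moreover have "(\<lambda>m. V powr p * ((1/6) ^ m / 6)) sums (V powr p * ((6/5) / 6))"
    using geometric_sums[of "1/6 :: real"] by (intro sums_mult sums_divide) simp_all
  ultimately have g: "g sums (V powr p / 5)"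
    by simp
  have "(\<Sum>m. ennreal (((real m + 2) * V) powr p * q ^ (m + 1))) \<le> (\<Sum>m. ennreal (g m))"
    using assms unfolding g_def by (intro suminf_le ennreal_leI weighted_geometric_term_le) auto
  also have "\<dots> = ennreal (\<Sum>m. g m)"
    using g by (intro suminf_ennreal2) (auto simp: g_def sums_iff)
  also have "(\<Sum>m. g m) = V powr p / 5"
    using g by (simp add: sums_iff)
  finally show ?thesis .
qed

lemma integrable_truncated_powr:
  fixes Y :: "'a \<Rightarrow> real" and V p :: real
  assumes "finite_measure M" and "Y \<in> borel_measurable M" and "V \<ge> 0" and "p \<ge> 0"
  shows "integrable M (\<lambda>x. min \<bar>Y x\<bar> V powr p)"
  using assms by (intro finite_measure.integrable_const_bound[where B="V powr p"])
    (auto intro!: powr_mono2)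

lemma measure_abs_ge_le_truncated_moment:
  fixes Y :: "'a \<Rightarrow> real" and V p :: real
  assumes "finite_measure M" and "Y \<in> borel_measurable M" and "V > 0" and "p > 0"
  shows "V powr p * measure M {x\<in>space M. V \<le> \<bar>Y x\<bar>} \<le> (\<integral>x. min \<bar>Y x\<bar> V powr p \<partial>M)"
proof -
  have "{x\<in>space M. V \<le> \<bar>Y x\<bar>} = {x\<in>space M. V powr p \<le> min \<bar>Y x\<bar> V powr p}"
    using assms(3,4) by (auto simp: min_def not_le dest: powr_less_mono2[of p "\<bar>Y _\<bar>" V])
  also have "measure M \<dots> \<le> (\<integral>x. min \<bar>Y x\<bar> V powr p \<partial>M) / V powr p"
    using assms by (intro integral_Markov_inequality_measure integrable_truncated_powr) auto
  finally show ?thesis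
    using assms(3) by (simp add: field_simps)
qed

lemma nn_integral_powr_le_truncated_moment_add:
  fixes Y :: "'a \<Rightarrow> real" and p V q :: real
  assumes "finite_measure M" and "Y \<in> borel_measurable M" and "p \<ge> 1" and "V > 0"
    and "0 \<le> q" and "q \<le> (1/12) powr p"
    and tails: "\<And>m. measure M {x\<in>space M. (real m + 1) * V \<le> \<bar>Y x\<bar>} \<le> q ^ (m + 1)"
  shows "(\<integral>\<^sup>+ x. ennreal (\<bar>Y x\<bar> powr p) \<partial>M)
    \<le> ennreal ((\<integral> x. min \<bar>Y x\<bar> V powr p \<partial>M) + V powr p / 5)"
proof -
  let ?E = "\<integral> x. min \<bar>Y x\<bar> V powr p \<partial>M"
  have "(\<integral>\<^sup>+ x. ennreal (\<bar>Y x\<bar> powr p) \<partial>M) \<le> (\<integral>\<^sup>+ x. ennreal (min \<bar>Y x\<bar> V powr p) \<partial>M)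
      + (\<Sum>m. ennreal (((real m + 2) * V) powr p) * emeasure M {x\<in>space M. (real m + 1) * V \<le> \<bar>Y x\<bar>})"
    using assms(2-4) by (intro nn_integral_powr_le_truncated_plus_tails) auto
  also have "\<dots> \<le> ennreal ?E + (\<Sum>m. ennreal (((real m + 2) * V) powr p * q ^ (m + 1)))"
  proof (intro add_mono suminf_le)
    show "(\<integral>\<^sup>+ x. ennreal (min \<bar>Y x\<bar> V powr p) \<partial>M) \<le> ennreal ?E"
      using assms(1-4) by (subst nn_integral_eq_integral) (auto intro: integrable_truncated_powr)
    fix m :: nat
    have "ennreal (((real m + 2) * V) powr p) * emeasure M {x\<in>space M. (real m + 1) * V \<le> \<bar>Y x\<bar>}
        = ennreal (((real m + 2) * V) powr p * measure M {x\<in>space M. (real m + 1) * V \<le> \<bar>Y x\<bar>})"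
      using assms(1) by (simp add: finite_measure.emeasure_eq_measure ennreal_mult)
    also have "\<dots> \<le> ennreal (((real m + 2) * V) powr p * q ^ (m + 1))"
      using tails[of m] by (intro ennreal_leI mult_left_mono) auto
    finally show "ennreal (((real m + 2) * V) powr p) * emeasure M {x\<in>space M. (real m + 1) * V \<le> \<bar>Y x\<bar>}
        \<le> ennreal (((real m + 2) * V) powr p * q ^ (m + 1))" .
  qed auto
  also have "\<dots> \<le> ennreal ?E + ennreal (V powr p / 5)"
    using assms(3-6) by (intro add_left_mono weighted_geometric_series_le)
  also have "\<dots> = ennreal (?E + V powr p / 5)"
    using assms(1-4) by (intro ennreal_plus[symmetric] integral_nonneg_AE) auto
  finally show ?thesis .
qed

theorem lemma3p2:
  fixes M :: "'a measure" and Y :: "'a \<Rightarrow> real" and p V :: real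
  assumes "prob_space M"
    and "Y \<in> borel_measurable M"
    and "symmetric_rv M Y"
    and "log_concave_rv M Y"
    and "p \<ge> 2" and "V > 0"
    and "(\<integral>\<^sup>+ x. ennreal (\<bar>Y x\<bar> powr p) \<partial>M) \<ge> ennreal (V powr p)"
  shows "(\<integral> x. (min \<bar>Y x\<bar> V) powr p \<partial>M) \<ge> (V / 12) powr p"
proof -
  interpret prob_space M by fact
  define E where "E = (\<integral> x. min \<bar>Y x\<bar> V powr p \<partial>M)"
  define q where "q = measure M {x\<in>space M. V \<le> \<bar>Y x\<bar>}"
  have split: "(V / 12) powr p = V powr p * (1/12) powr p"
    by (simp add: powr_mult[symmetric])
  show ?thesis
  proof (cases "q \<le> (1/12) powr p")
    case True
    have "measure M {x\<in>space M. (real m + 1) * V \<le> \<bar>Y x\<bar>} \<le> q ^ (m + 1)" for m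
      using log_concave_symmetric_rv_tail_power[OF assms(1-4,6), of "m + 1"]
      by (simp add: q_def add.commute)
    then have "ennreal (V powr p) \<le> ennreal (E + V powr p / 5)"
      unfolding E_def using assms(2,5-7) True
      by (intro order_trans[OF _ nn_integral_powr_le_truncated_moment_add]) (auto simp: q_def)
    then have "V powr p \<le> E + V powr p / 5"
      using powr_gt_zero[of V p] assms(6) by (auto simp: ennreal_le_iff2)
    moreover have "V powr p * (1/12) powr p \<le> V powr p * (1/12)"
      using assms(5) by (intro mult_left_mono powr_le_one_le) auto
    ultimately show ?thesis
      using split powr_gt_zero[of V p] assms(6) unfolding E_def by linarith
  next
    case False
    then have "V powr p * (1/12) powr p \<le> V powr p * q"
      by (intro mult_left_mono) auto
    also have "\<dots> \<le> E"
      unfolding E_def q_def using assms(2,5,6)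
      by (intro measure_abs_ge_le_truncated_moment) auto
    finally show ?thesis
      using split unfolding E_def by simp
  qed
qed

end
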